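(* Let $g:\mathbb{R}\times(0,\infty)\times\mathbb{R}\to\mathbb{R}^2$ be the Kalman-filter update of a univariate Gaussian belief $b=(\mu,s)^{\mathrm{T}}$ (mean $\mu\in\mathbb{R}$, variance $s>0$) given an observation $y=x+w$ of the scalar state $x$ corrupted by noise $w\sim\mathcal{N}(0,1)$, i.e. $$g(b,y)=\left(\mu+\frac{s}{s+1}(y-\mu),\; s-\frac{s^2}{s+1}\right)^{\mathrm{T}}.$$ Then there exist constants $K_2,K_3,K_4,K_5\ge0$ and positive integers $L_1,L_2$ such that for all $\mu\in\mathbb{R}$, $s>0$, $y\in\mathbb{R}$, $$\|g(b,y)\|_2\le K_2+K_3\|b\|_2^{L_1}+K_4\|y\|_2^{L_2}+K_5\|b\|_2^{L_1}\|y\|_2^{L_2}$$ and $$\left\|\frac{\partial}{\partial b}g(b,y)\right\|_2\le K_2+K_3\|b\|_2^{L_1}+K_4\|y\|_2^{L_2}+K_5\|b\|_2^{L_1}\|y\|_2^{L_2}.$$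
   Context: $\|\cdot\|_2$ on matrices denotes the operator (spectral) norm induced by the Euclidean norm. *)

theory Defs
  imports "HOL-Analysis.Analysis"
begin

text \<open>Kalman-filter update of a univariate Gaussian belief b = (mu, s), with
  b$1 = mu (mean) and b$2 = s (variance), given observation y = x + w, w ~ N(0,1).\<close>
definition kalman_update :: "real^2 \<Rightarrow> real \<Rightarrow> real^2" where
  "kalman_update b y =
     vector [b$1 + b$2 / (b$2 + 1) * (y - b$1), b$2 - (b$2)^2 / (b$2 + 1)]"

end

theory Submission
  imports Defs
begin

text \<open>For a variance \<open>s \<ge> 0\<close> the update is the pair \<open>((\<mu> + s y)/(s + 1), s/(s + 1))\<close>: the
  mean is a convex combination of \<open>\<mu>\<close> and \<open>y\<close> and the variance lies in \<open>[0, 1)\<close>, so the update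
  grows at most linearly in \<open>(b, y)\<close>. Its Jacobian \<open>[[1/(s + 1), (y - \<mu>)/(s + 1)\<^sup>2], [0, 1/(s + 1)\<^sup>2]]\<close>
  likewise has operator norm at most \<open>2 + |\<mu>| + |y|\<close>. Hence both bounds hold with
  \<open>L\<^sub>1 = L\<^sub>2 = 1\<close>, \<open>K\<^sub>2 = 2\<close>, \<open>K\<^sub>3 = K\<^sub>4 = 1\<close> and \<open>K\<^sub>5 = 0\<close>.\<close>

lemma vector_2_eq_axis: "(vector [a, b] :: real^2) = a *\<^sub>R axis 1 1 + b *\<^sub>R axis 2 1"
  by (simp add: vec_eq_iff forall_2 axis_def)

lemma norm_vector_2_le: "norm (vector [a, b] :: real^2) \<le> \<bar>a\<bar> + \<bar>b\<bar>"
  using norm_le_l1_cart[of "vector [a, b] :: real^2"] by (simp add: UNIV_2)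

lemma kalman_update_eq:
  assumes "c$2 + 1 \<noteq> 0"
  shows "kalman_update c y = vector [(c$1 + c$2 * y) / (c$2 + 1), c$2 / (c$2 + 1)]"
  using assms unfolding kalman_update_def
  by (simp add: field_simps power2_eq_square)

definition kalman_update_deriv :: "real^2 \<Rightarrow> real \<Rightarrow> real^2 \<Rightarrow> real^2" where
  "kalman_update_deriv b y h =
     vector [h$1 / (b$2 + 1) + h$2 * (y - b$1) / (b$2 + 1)^2, h$2 / (b$2 + 1)^2]"

lemma has_derivative_vec_nth [derivative_intros]:
  "((\<lambda>x. x $ i) has_derivative (\<lambda>h. h $ i)) F"
  using bounded_linear_vec_nth by (rule bounded_linear_imp_has_derivative)

lemma has_derivative_kalman_update:
  assumes "b$2 + 1 \<noteq> 0"
  shows "((\<lambda>c. kalman_update c y) has_derivative kalman_update_deriv b y) (at b)"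
proof -
  let ?closed_form = "\<lambda>c::real^2. vector [(c$1 + c$2 * y) / (c$2 + 1), c$2 / (c$2 + 1)] :: real^2"
  have "(?closed_form has_derivative kalman_update_deriv b y) (at b)"
    unfolding vector_2_eq_axis kalman_update_deriv_def using assms
    by (auto intro!: derivative_eq_intros ext simp: vec_eq_iff forall_2 axis_def)
      (simp_all add: power2_eq_square divide_simps, simp_all add: algebra_simps)
  moreover have "open {c::real^2. c$2 + 1 \<noteq> 0}"
    by (intro open_Collect_neq continuous_intros)
  ultimately show ?thesis
    by (rule has_derivative_transform_within_open) (use assms in \<open>auto simp: kalman_update_eq\<close>)
qed

lemma abs_divide_le_abs:
  fixes u d :: "'a::linordered_field"
  assumes "1 \<le> d"
  shows "\<bar>u / d\<bar> \<le> \<bar>u\<bar>"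
  using assms by (simp add: abs_divide divide_le_eq mult_le_cancel_left1)

lemma norm_kalman_update_le:
  assumes "b$2 \<ge> 0"
  shows "norm (kalman_update b y) \<le> 1 + norm b + \<bar>y\<bar>"
proof -
  have mean: "\<bar>(b$1 + b$2 * y) / (b$2 + 1)\<bar> \<le> \<bar>b$1\<bar> + \<bar>y\<bar>"
  proof -
    have "\<bar>b$1 + b$2 * y\<bar> \<le> \<bar>b$1\<bar> + b$2 * \<bar>y\<bar>"
      using assms by (metis abs_mult abs_of_nonneg abs_triangle_ineq)
    also have "\<dots> \<le> (\<bar>b$1\<bar> + \<bar>y\<bar>) * (b$2 + 1)"
      using assms by (simp add: algebra_simps)
    finally show ?thesis
      using assms by (simp add: abs_divide pos_divide_le_eq)
  qed
  have variance: "\<bar>b$2 / (b$2 + 1)\<bar> \<le> 1"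
    using assms by (simp add: abs_divide pos_divide_le_eq)
  have "norm (kalman_update b y) \<le> \<bar>(b$1 + b$2 * y) / (b$2 + 1)\<bar> + \<bar>b$2 / (b$2 + 1)\<bar>"
    using assms by (subst kalman_update_eq) (simp_all only: norm_vector_2_le)
  also have "\<dots> \<le> 1 + norm b + \<bar>y\<bar>"
    using mean variance component_le_norm_cart[of b 1] by linarith
  finally show ?thesis .
qed

lemma onorm_kalman_update_deriv_le:
  assumes "b$2 \<ge> 0"
  shows "onorm (kalman_update_deriv b y) \<le> 2 + norm b + \<bar>y\<bar>"
proof (rule onorm_le)
  fix h :: "real^2"
  have denom: "1 \<le> b$2 + 1" and denom_sq: "1 \<le> (b$2 + 1)^2"
    using assms by (simp_all add: one_le_power)
  have "norm (kalman_update_deriv b y h)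
      \<le> \<bar>h$1 / (b$2 + 1)\<bar> + \<bar>h$2 * (y - b$1) / (b$2 + 1)^2\<bar> + \<bar>h$2 / (b$2 + 1)^2\<bar>"
    unfolding kalman_update_deriv_def
    by (rule order_trans[OF norm_vector_2_le], rule add_right_mono, rule abs_triangle_ineq)
  also have "\<dots> \<le> \<bar>h$1\<bar> + \<bar>h$2\<bar> * \<bar>y - b$1\<bar> + \<bar>h$2\<bar>"
    using abs_divide_le_abs[OF denom, of "h$1"] abs_divide_le_abs[OF denom_sq, of "h$2"]
      abs_divide_le_abs[OF denom_sq, of "h$2 * (y - b$1)"] abs_mult[of "h$2" "y - b$1"]
    by linarith
  also have "\<dots> \<le> norm h + norm h * (\<bar>y\<bar> + norm b) + norm h"
    using component_le_norm_cart[of h 1] component_le_norm_cart[of h 2] component_le_norm_cart[of b 1]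
    by (intro add_mono mult_mono) auto
  finally show "norm (kalman_update_deriv b y h) \<le> (2 + norm b + \<bar>y\<bar>) * norm h"
    by (simp add: algebra_simps)
qed

theorem proposition1:
  shows "\<exists>K2 K3 K4 K5 :: real. \<exists>L1 L2 :: nat.
    K2 \<ge> 0 \<and> K3 \<ge> 0 \<and> K4 \<ge> 0 \<and> K5 \<ge> 0 \<and> L1 > 0 \<and> L2 > 0 \<and>
    (\<forall>(b::real^2) (y::real). b$2 > 0 \<longrightarrow>
       norm (kalman_update b y)
         \<le> K2 + K3 * norm b ^ L1 + K4 * \<bar>y\<bar> ^ L2 + K5 * norm b ^ L1 * \<bar>y\<bar> ^ L2 \<and>
       (\<lambda>c. kalman_update c y) differentiable (at b) \<and>
       onorm (frechet_derivative (\<lambda>c. kalman_update c y) (at b))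
         \<le> K2 + K3 * norm b ^ L1 + K4 * \<bar>y\<bar> ^ L2 + K5 * norm b ^ L1 * \<bar>y\<bar> ^ L2)"
proof (rule exI[of _ 2], rule exI[of _ 1], rule exI[of _ 1], rule exI[of _ 0],
    rule exI[of _ 1], rule exI[of _ 1], intro conjI allI impI)
  fix b :: "real^2" and y :: real
  assume "b$2 > 0"
  then have nonneg: "b$2 \<ge> 0" and ne: "b$2 + 1 \<noteq> 0"
    by simp_all
  show "norm (kalman_update b y) \<le> 2 + 1 * norm b ^ 1 + 1 * \<bar>y\<bar> ^ 1 + 0 * norm b ^ 1 * \<bar>y\<bar> ^ 1"
    using norm_kalman_update_le[OF nonneg, of y] by simp
  have deriv: "((\<lambda>c. kalman_update c y) has_derivative kalman_update_deriv b y) (at b)"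
    using ne by (rule has_derivative_kalman_update)
  then show "(\<lambda>c. kalman_update c y) differentiable (at b)"
    by (rule differentiableI)
  show "onorm (frechet_derivative (\<lambda>c. kalman_update c y) (at b))
      \<le> 2 + 1 * norm b ^ 1 + 1 * \<bar>y\<bar> ^ 1 + 0 * norm b ^ 1 * \<bar>y\<bar> ^ 1"
    using onorm_kalman_update_deriv_le[OF nonneg, of y] frechet_derivative_at[OF deriv] by simp
qed simp_all

end
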